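(* Let $\{x_i\}_{i\in[N]}$ be the global solution of the delayed consensus system described in the context. Then for almost all $t>2\tau$, \[ \frac{\mathrm d}{\mathrm dt}d_x(t)\le 2\int_{t-\tau}^t d_x(s-\tau)\,\mathrm ds+2\int_{t-\sigma}^t d_x(s-\tau)\,\mathrm ds+2\int_{t-\tau}^t\int_{s-\tau}^s\max_{l\in[N]}|\dot x_l(r)|\,\mathrm dr\,\mathrm ds+2\int_{t-\sigma}^t\int_{s-\tau}^s\max_{l\in[N]}|\dot x_l(r)|\,\mathrm dr\,\mathrm ds-N\underline a(t)d_x(t), \] where $\underline a(t):=\min_{i,j\in[N]}a_{ij}(t)$.
   Context: Let $N\ge2$, $d\ge1$ be integers, $[N]=\{1,\dots,N\}$, $0\le\sigma\le\tau$. Let $\psi:[0,\infty)\to[0,\infty)$ be continuous, nonincreasing, positive everywhere, with $\sup\psi\le1$. Given $x_i^0\in C([-\tau,0],\mathbb{R}^d)$, $\{x_i\}$ is the global solution (continuous on $[-\tau,\infty)$, continuously differentiable on $[0,\infty)$) of $\dot x_i(t)=\sum_{j\ne i}a_{ij}(t)(x_j(t-\tau)-x_i(t-\sigma))$ for $t>0$, with $a_{ij}(t)=\frac1{N-1}\psi(|x_i(t-\sigma)-x_j(t-\tau)|)$ for all $i,j\in[N]$, and $x_i=x_i^0$ on $[-\tau,0]$. $d_x(t):=\max_{i,j\in[N]}|x_i(t)-x_j(t)|$. *)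

theory Defs
  imports "HOL-Analysis.Analysis"
begin

text \<open>Agents are indexed by {1..N}; positions x i t live in a Euclidean space 'a
 (playing the role of R^d, d = DIM('a) \<ge> 1).\<close>

definition comm_weight ::
  "(real \<Rightarrow> real) \<Rightarrow> nat \<Rightarrow> real \<Rightarrow> real \<Rightarrow> (nat \<Rightarrow> real \<Rightarrow> 'a::euclidean_space)
     \<Rightarrow> nat \<Rightarrow> nat \<Rightarrow> real \<Rightarrow> real" where
  "comm_weight \<psi> N \<sigma> \<tau> x i j t =
     \<psi> (norm (x i (t - \<sigma>) - x j (t - \<tau>))) / (real N - 1)"

definition diam_x :: "nat \<Rightarrow> (nat \<Rightarrow> real \<Rightarrow> 'a::euclidean_space) \<Rightarrow> real \<Rightarrow> real" where
  "diam_x N x t = Max {norm (x i t - x j t) | i j. i \<in> {1..N} \<and> j \<in> {1..N}}"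

definition min_weight ::
  "(real \<Rightarrow> real) \<Rightarrow> nat \<Rightarrow> real \<Rightarrow> real \<Rightarrow> (nat \<Rightarrow> real \<Rightarrow> 'a::euclidean_space) \<Rightarrow> real \<Rightarrow> real" where
  "min_weight \<psi> N \<sigma> \<tau> x t =
     Min {comm_weight \<psi> N \<sigma> \<tau> x i j t | i j. i \<in> {1..N} \<and> j \<in> {1..N}}"

definition max_speed :: "nat \<Rightarrow> (nat \<Rightarrow> real \<Rightarrow> 'a::euclidean_space) \<Rightarrow> real \<Rightarrow> real" where
  "max_speed N x r = Max {norm (vector_derivative (x l) (at r)) | l. l \<in> {1..N}}"

end

theory Submission
  imports Defs
begin

text \<open>
  The diameter is the maximum of the finitely many functions |x_i - x_j|. Such a norm is
  differentiable wherever it is nonzero or its zero set accumulates, and a maximum of two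
  differentiable functions is differentiable wherever they differ or their coincidence set
  accumulates; since isolated points of a set of reals form a countable set, the diameter is
  differentiable outside a null set.

  At such a time t > 2 tau, take a farthest pair (i, j). The diameter touches |x_i - x_j| from
  above at t, so its derivative is (x_i' - x_j') . (x_i - x_j) / d(t). Replacing the delayed
  positions in the equations of x_i and x_j by the current ones costs at most the displacements
  |x_k(t) - x_k(t - delta)| for delta = sigma, tau; these are bounded by integrating the speed
  estimate max_l |x_l'(s)| <= d(s - tau) + integral over [s - tau, s] of max_l |x_l'|, which
  itself follows from the equation since the weights of each agent sum to at most 1. With current
  positions, every x_k lies on the side of x_i facing x_j (and vice versa), so lowering all weights
  to their minimum only increases the expression, which then sums to -N a(t) d(t)^2.
\<close>

lemma countable_isolated_points:
  fixes Z :: "'a::second_countable_topology set"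
  shows "countable {z\<in>Z. \<not> z islimpt Z}"
proof -
  obtain \<B> :: "'a set set" where \<B>: "countable \<B>" "\<And>C. C \<in> \<B> \<Longrightarrow> open C"
    "\<And>S. open S \<Longrightarrow> \<exists>U. U \<subseteq> \<B> \<and> S = \<Union>U"
    by (metis univ_second_countable)
  define I where "I = {z\<in>Z. \<not> z islimpt Z}"
  have "\<exists>B\<in>\<B>. B \<inter> Z = {z}" if "z \<in> I" for z
  proof -
    obtain T where T: "z \<in> T" "open T" "\<And>y. y \<in> Z \<Longrightarrow> y \<in> T \<Longrightarrow> y = z"
      using \<open>z \<in> I\<close> unfolding I_def islimpt_def by auto
    obtain U where "U \<subseteq> \<B>" "T = \<Union>U"
      using \<B>(3)[OF \<open>open T\<close>] by blast
    then obtain B where "B \<in> \<B>" "z \<in> B" "B \<subseteq> T"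
      using \<open>z \<in> T\<close> by blast
    moreover have "z \<in> Z" using \<open>z \<in> I\<close> by (simp add: I_def)
    ultimately show ?thesis using T(3) by blast
  qed
  then obtain B where B: "\<And>z. z \<in> I \<Longrightarrow> B z \<in> \<B>" "\<And>z. z \<in> I \<Longrightarrow> B z \<inter> Z = {z}"
    by metis
  have "inj_on B I"
  proof (rule inj_onI)
    fix z w assume "z \<in> I" "w \<in> I" "B z = B w"
    then show "z = w" using B(2) by (metis singleton_inject)
  qed
  moreover have "countable (B ` I)"
    using B(1) by (intro countable_subset[OF _ \<B>(1)]) blast
  ultimately show ?thesis
    unfolding I_def[symmetric] by (rule countable_image_inj_on[rotated])
qed

lemma has_vector_derivative_zero_at_limpt_of_zeros:
  assumes h: "(h has_vector_derivative D) (at t)" and "h t = 0"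
    and "t islimpt {s. h s = 0}"
  shows "D = 0"
proof -
  define Z where "Z = {s. h s = 0}"
  have "t \<in> Z" using \<open>h t = 0\<close> by (simp add: Z_def)
  have "(h has_vector_derivative 0) (at t within Z)"
    by (rule has_vector_derivative_transform_within[of "\<lambda>_. 0" 0 t Z 1])
       (use \<open>t \<in> Z\<close> in \<open>auto simp: Z_def\<close>)
  moreover have "at t within Z \<noteq> bot"
    using \<open>t islimpt {s. h s = 0}\<close> by (simp add: Z_def trivial_limit_within)
  ultimately show ?thesis
    using vector_derivative_unique_within has_vector_derivative_at_within[OF h] by blast
qed

lemma has_real_derivative_zero_if_dominated:
  fixes f :: "real \<Rightarrow> real"
  assumes h: "(h has_vector_derivative 0) (at t)" and "h t = 0"
    and dom: "\<And>y. \<bar>f y - f t\<bar> \<le> norm (h y)"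
  shows "(f has_real_derivative 0) (at t)"
proof -
  have "((\<lambda>y. norm (h y) / \<bar>y - t\<bar>) \<longlongrightarrow> 0) (at t)"
    using h \<open>h t = 0\<close> unfolding has_vector_derivative_def has_derivative_iff_norm by simp
  then have "((\<lambda>y. (f y - f t) / (y - t)) \<longlongrightarrow> 0) (at t)"
    by (rule Lim_null_comparison[rotated])
       (auto intro!: always_eventually divide_right_mono dom)
  then show ?thesis
    by (simp add: has_field_derivative_iff)
qed

lemma max_differentiable_at:
  fixes F g :: "real \<Rightarrow> real"
  assumes "F differentiable (at t)" "g differentiable (at t)"
    and "F t \<noteq> g t \<or> t islimpt {s. F s = g s}"
  shows "(\<lambda>s. max (F s) (g s)) differentiable (at t)"
proof -
  have smaller: "(\<lambda>s. max (F' s) (g' s)) differentiable (at t)"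
    if "F' t < g' t" "F' differentiable (at t)" "g' differentiable (at t)" for F' g' :: "real \<Rightarrow> real"
  proof -
    have "isCont (\<lambda>s. g' s - F' s) t"
      using that by (intro continuous_intros differentiable_imp_continuous_within)
    then have "eventually (\<lambda>s. 0 < g' s - F' s) (at t)"
      using \<open>F' t < g' t\<close> by (intro order_tendstoD(1)) (auto simp: isCont_def)
    then have "eventually (\<lambda>s. max (F' s) (g' s) = g' s) (nhds t)"
      using \<open>F' t < g' t\<close> unfolding eventually_at_filter by (auto elim!: eventually_mono)
    moreover obtain D where "(g' has_real_derivative D) (at t)"
      using \<open>g' differentiable (at t)\<close> real_differentiable_def by blast
    ultimately have "((\<lambda>s. max (F' s) (g' s)) has_real_derivative D) (at t)"
      by (subst DERIV_cong_ev[OF refl _ refl]) auto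
    then show ?thesis
      using real_differentiable_def by blast
  qed
  consider "F t < g t" | "g t < F t" | "F t = g t" "t islimpt {s. F s = g s}"
    using assms(3) by fastforce
  then show ?thesis
  proof cases
    case 1
    then show ?thesis using smaller assms by blast
  next
    case 2
    then show ?thesis using smaller[of g F] assms by (simp add: max.commute)
  next
    case 3
    define h where "h s = F s - g s" for s
    have "h differentiable (at t)"
      unfolding h_def using assms(1,2) by (rule differentiable_diff)
    then obtain D where D: "(h has_real_derivative D) (at t)"
      using real_differentiable_def by blast
    have "D = 0"
      by (rule has_vector_derivative_zero_at_limpt_of_zeros[of h])
         (use D 3 in \<open>auto simp: h_def has_real_derivative_iff_has_vector_derivative\<close>)
    then have "((\<lambda>s. max (h s) 0) has_real_derivative 0) (at t)"
      using D 3
      by (intro has_real_derivative_zero_if_dominated[of h])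
         (auto simp: h_def has_real_derivative_iff_has_vector_derivative)
    moreover obtain E where "(g has_real_derivative E) (at t)"
      using assms(2) real_differentiable_def by blast
    ultimately have "(\<lambda>s. g s + max (h s) 0) differentiable (at t)"
      using DERIV_add real_differentiable_def by blast
    moreover have "(\<lambda>s. g s + max (h s) 0) = (\<lambda>s. max (F s) (g s))"
      by (auto simp: h_def max_def)
    ultimately show ?thesis by simp
  qed
qed

lemma norm_differentiable_at:
  fixes u :: "real \<Rightarrow> 'a::real_inner"
  assumes u: "(u has_vector_derivative u') (at t)"
    and "u t \<noteq> 0 \<or> t islimpt {s. u s = 0}"
  shows "(\<lambda>s. norm (u s)) differentiable (at t)"
proof (cases "u t = 0")
  case False
  have "u differentiable (at t)"
    using u by (rule differentiableI_vector)
  then have "(norm \<circ> u) differentiable (at t)"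
    using False by (intro differentiable_chain_at differentiable_norm_at)
  then show ?thesis by (simp add: o_def)
next
  case True
  then have "u' = 0"
    using assms by (intro has_vector_derivative_zero_at_limpt_of_zeros[OF u]) auto
  then have "((\<lambda>s. norm (u s)) has_real_derivative 0) (at t)"
    using u True by (intro has_real_derivative_zero_if_dominated[of u]) auto
  then show ?thesis
    using real_differentiable_def by blast
qed

lemma countable_nondifferentiable_norm:
  fixes u :: "real \<Rightarrow> 'a::real_inner"
  assumes "\<And>t. t \<in> S \<Longrightarrow> u differentiable (at t)"
  shows "countable {t\<in>S. \<not> (\<lambda>s. norm (u s)) differentiable (at t)}"
proof (rule countable_subset[OF _ countable_isolated_points])
  show "{t\<in>S. \<not> (\<lambda>s. norm (u s)) differentiable (at t)} \<subseteq> {z\<in>{s. u s = 0}. \<not> z islimpt {s. u s = 0}}"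
    using assms norm_differentiable_at vector_derivative_works by blast
qed

lemma countable_nondifferentiable_Max:
  fixes f :: "'i \<Rightarrow> real \<Rightarrow> real"
  assumes "finite I" "I \<noteq> {}"
    and "\<And>k. k \<in> I \<Longrightarrow> countable {t\<in>S. \<not> f k differentiable (at t)}"
  shows "countable {t\<in>S. \<not> (\<lambda>s. Max ((\<lambda>k. f k s) ` I)) differentiable (at t)}"
  using assms
proof (induction I rule: finite_ne_induct)
  case (singleton k)
  then show ?case by simp
next
  case (insert k I)
  define F where "F s = Max ((\<lambda>k. f k s) ` I)" for s
  define Z where "Z = {s. f k s = F s}"
  have "{t\<in>S. \<not> (\<lambda>s. Max ((\<lambda>k. f k s) ` insert k I)) differentiable (at t)}
      \<subseteq> {t\<in>S. \<not> f k differentiable (at t)} \<union> {t\<in>S. \<not> F differentiable (at t)}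
          \<union> {z\<in>Z. \<not> z islimpt Z}"
    using max_differentiable_at[of "f k" _ F] insert.hyps
    by (auto simp: F_def Z_def fun_eq_iff)
  moreover have "countable {t\<in>S. \<not> F differentiable (at t)}"
    unfolding F_def by (intro insert.IH insert.prems) simp
  moreover have "countable {t\<in>S. \<not> f k differentiable (at t)}"
    by (rule insert.prems) simp
  ultimately show ?case
    using countable_isolated_points[of Z] by (meson countable_Un countable_subset)
qed

lemma continuous_on_Max:
  fixes f :: "'i \<Rightarrow> 'b::topological_space \<Rightarrow> real"
  assumes "finite I" "I \<noteq> {}" "\<And>k. k \<in> I \<Longrightarrow> continuous_on S (f k)"
  shows "continuous_on S (\<lambda>s. Max ((\<lambda>k. f k s) ` I))"
  using assms
proof (induction I rule: finite_ne_induct)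
  case (singleton k)
  then show ?case by simp
next
  case (insert k I)
  then have "continuous_on S (\<lambda>s. max (f k s) (Max ((\<lambda>k. f k s) ` I)))"
    by (intro continuous_on_max) auto
  then show ?case
    using insert by simp
qed

lemma has_real_derivative_norm:
  fixes u :: "real \<Rightarrow> 'a::real_inner"
  assumes u: "(u has_vector_derivative u') (at t)" and "u t \<noteq> 0"
  shows "((\<lambda>s. norm (u s)) has_real_derivative u' \<bullet> sgn (u t)) (at t)"
proof -
  have "((\<lambda>s. norm (u s)) has_derivative (\<lambda>h. (h *\<^sub>R u') \<bullet> sgn (u t))) (at t)"
    using has_derivative_compose[OF u[unfolded has_vector_derivative_def] has_derivative_norm[OF \<open>u t \<noteq> 0\<close>]]
    by (simp add: o_def)
  then show ?thesis
    by (simp add: has_field_derivative_def mult_commute_abs)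
qed

lemma DERIV_eq_if_touching_from_below:
  fixes f g :: "real \<Rightarrow> real"
  assumes "(f has_real_derivative D) (at t)" "(g has_real_derivative E) (at t)"
    and "\<And>s. g s \<le> f s" "g t = f t"
  shows "D = E"
proof -
  have "D - E = 0"
    by (rule DERIV_local_min[OF DERIV_diff[OF assms(1,2)], of 1]) (use assms(3,4) in auto)
  then show ?thesis by simp
qed

lemma inner_le_0_if_farthest:
  fixes p q r :: "'a::real_inner"
  assumes "norm (r - q) \<le> norm (p - q)"
  shows "(p - q) \<bullet> (r - p) \<le> 0"
proof -
  have "(p - q) \<bullet> (r - p) = (p - q) \<bullet> (r - q) - norm (p - q) ^ 2"
    by (simp add: power2_norm_eq_inner algebra_simps inner_diff_right)
  also have "(p - q) \<bullet> (r - q) \<le> norm (p - q) * norm (r - q)"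
    by (rule norm_cauchy_schwarz)
  also have "\<dots> \<le> norm (p - q) ^ 2"
    using assms by (simp add: power2_eq_square mult_left_mono)
  finally show ?thesis by simp
qed

lemma continuous_on_integral_over_window:
  fixes f :: "real \<Rightarrow> real"
  assumes f: "continuous_on {a - h..b} f" and "0 \<le> h"
  shows "continuous_on {a..b} (\<lambda>s. integral {s - h..s} f)"
proof -
  define F where "F u = integral {a - h..u} f" for u
  have F: "continuous_on {a - h..b} F"
    unfolding F_def by (intro indefinite_integral_continuous_1 integrable_continuous_interval f)
  have "continuous_on {a..b} (\<lambda>s. F s - F (s - h))"
    using \<open>0 \<le> h\<close>
    by (intro continuous_on_diff continuous_on_subset[OF F] continuous_on_compose2[OF F])
       (auto intro!: continuous_intros)
  moreover have "integral {s - h..s} f = F s - F (s - h)" if "s \<in> {a..b}" for s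
  proof -
    have "integral {a - h..s - h} f + integral {s - h..s} f = F s"
      unfolding F_def using that \<open>0 \<le> h\<close>
      by (intro Henstock_Kurzweil_Integration.integral_combine
            integrable_continuous_interval continuous_on_subset[OF f]) auto
    then show ?thesis unfolding F_def by simp
  qed
  ultimately show ?thesis
    by (metis (no_types, lifting) continuous_on_cong)
qed

locale delayed_consensus =
  fixes N :: nat and \<sigma> \<tau> :: real and \<psi> :: "real \<Rightarrow> real"
    and x :: "nat \<Rightarrow> real \<Rightarrow> 'a::euclidean_space"
  assumes N: "N \<ge> 2"
    and \<sigma>: "0 \<le> \<sigma>" "\<sigma> \<le> \<tau>"
    and \<psi>_nonneg: "\<And>r. 0 \<le> r \<Longrightarrow> 0 \<le> \<psi> r"
    and \<psi>_le1: "\<And>r. 0 \<le> r \<Longrightarrow> \<psi> r \<le> 1"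
    and x_cont: "\<And>i. i \<in> {1..N} \<Longrightarrow> continuous_on {-\<tau>..} (x i)"
    and x_C1: "\<And>i. i \<in> {1..N} \<Longrightarrow>
                 \<exists>x'. continuous_on {0..} x' \<and>
                      (\<forall>t\<ge>0. (x i has_vector_derivative x' t) (at t within {0..}))"
    and x_ode: "\<And>i t. i \<in> {1..N} \<Longrightarrow> t > 0 \<Longrightarrow>
                 (x i has_vector_derivative
                    (\<Sum>j\<in>{1..N} - {i}. comm_weight \<psi> N \<sigma> \<tau> x i j t *\<^sub>R (x j (t - \<tau>) - x i (t - \<sigma>))))
                 (at t)"
begin

abbreviation "diam \<equiv> diam_x N x"
abbreviation "speed \<equiv> max_speed N x"
abbreviation "weight \<equiv> comm_weight \<psi> N \<sigma> \<tau> x"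
abbreviation "weight_min \<equiv> min_weight \<psi> N \<sigma> \<tau> x"
abbreviation velocity where "velocity i t \<equiv> vector_derivative (x i) (at t)"

lemma \<tau>_nonneg: "0 \<le> \<tau>"
  using \<sigma> by linarith

lemma diam_eq_Max: "diam s = Max ((\<lambda>p. norm (x (fst p) s - x (snd p) s)) ` ({1..N} \<times> {1..N}))"
  unfolding diam_x_def by (rule arg_cong[where f = Max]) force

lemma norm_le_diam: "i \<in> {1..N} \<Longrightarrow> j \<in> {1..N} \<Longrightarrow> norm (x i s - x j s) \<le> diam s"
  unfolding diam_eq_Max by (rule Max_ge) force+

lemma diam_attained:
  obtains i j where "i \<in> {1..N}" "j \<in> {1..N}" "diam s = norm (x i s - x j s)"
proof -
  have "diam s \<in> (\<lambda>p. norm (x (fst p) s - x (snd p) s)) ` ({1..N} \<times> {1..N})"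
    unfolding diam_eq_Max using N by (intro Max_in) auto
  then show ?thesis using that by force
qed

lemma diam_nonneg: "0 \<le> diam s"
  using norm_le_diam[of 1 1 s] N by simp

lemma continuous_on_diam: "continuous_on {-\<tau>..} diam"
  unfolding diam_eq_Max using N
  by (intro continuous_on_Max[where f = "\<lambda>p s. norm (x (fst p) s - x (snd p) s)"])
     (auto intro!: continuous_intros x_cont)

lemma has_velocity: "i \<in> {1..N} \<Longrightarrow> 0 < t \<Longrightarrow> (x i has_vector_derivative velocity i t) (at t)"
  unfolding vector_derivative_works[symmetric] by (rule differentiableI_vector[OF x_ode])

lemma velocity_eq:
  "i \<in> {1..N} \<Longrightarrow> 0 < t \<Longrightarrow>
     velocity i t = (\<Sum>j\<in>{1..N} - {i}. weight i j t *\<^sub>R (x j (t - \<tau>) - x i (t - \<sigma>)))"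
  using x_ode by (rule vector_derivative_at)

lemma continuous_on_velocity:
  assumes i: "i \<in> {1..N}"
  shows "continuous_on {0<..} (velocity i)"
proof -
  obtain x' where x': "continuous_on {0..} x'"
    "\<And>t. t \<ge> 0 \<Longrightarrow> (x i has_vector_derivative x' t) (at t within {0..})"
    using x_C1[OF i] by blast
  have velocity_eq_x': "velocity i t = x' t" if "0 < t" for t
  proof -
    have "(x i has_vector_derivative x' t) (at t within {0<..})"
      using x'(2)[of t] that by (auto intro: has_vector_derivative_within_subset)
    then have "(x i has_vector_derivative x' t) (at t)"
      using that by (subst (asm) has_vector_derivative_within_open) auto
    then show ?thesis
      by (rule vector_derivative_at)
  qed
  have "continuous_on {0<..} x'"
    by (rule continuous_on_subset[OF x'(1)]) auto
  then show ?thesis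
    by (rule continuous_on_eq) (simp add: velocity_eq_x')
qed

lemma countable_nondifferentiable_diam: "countable {t\<in>{0<..}. \<not> diam differentiable (at t)}"
proof -
  have "diam = (\<lambda>s. Max ((\<lambda>p. norm (x (fst p) s - x (snd p) s)) ` ({1..N} \<times> {1..N})))"
    using diam_eq_Max by blast
  moreover have "countable {t\<in>{0<..}. \<not> (\<lambda>s. norm (x (fst p) s - x (snd p) s)) differentiable (at t)}"
    if "p \<in> {1..N} \<times> {1..N}" for p
  proof (rule countable_nondifferentiable_norm)
    fix t :: real assume "t \<in> {0<..}"
    then show "(\<lambda>s. x (fst p) s - x (snd p) s) differentiable (at t)"
      using that by (intro differentiableI_vector[OF has_vector_derivative_diff[OF has_velocity has_velocity]])
        auto
  qed
  ultimately show ?thesis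
    using N by (simp only:) (intro countable_nondifferentiable_Max; auto)
qed

lemma speed_eq: "speed r = Max ((\<lambda>l. norm (velocity l r)) ` {1..N})"
  unfolding max_speed_def by (rule arg_cong[where f = Max]) blast

lemma norm_velocity_le_speed: "l \<in> {1..N} \<Longrightarrow> norm (velocity l r) \<le> speed r"
  unfolding speed_eq by (rule Max_ge) auto

lemma speed_nonneg: "0 \<le> speed r"
  using order_trans[OF norm_ge_zero norm_velocity_le_speed[of 1 r]] N by simp

lemma continuous_on_speed: "continuous_on {0<..} speed"
  unfolding speed_eq using N
  by (intro continuous_on_Max[where f = "\<lambda>l r. norm (velocity l r)"])
     (auto intro!: continuous_on_norm continuous_on_velocity)

lemma speed_integrable: "0 < p \<Longrightarrow> speed integrable_on {p..q}"
  by (rule integrable_continuous_interval, rule continuous_on_subset[OF continuous_on_speed]) auto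

lemma displacement_le_integral_speed:
  assumes i: "i \<in> {1..N}" and "0 < p" "p \<le> q"
  shows "norm (x i q - x i p) \<le> integral {p..q} speed"
proof -
  have "(velocity i has_integral (x i q - x i p)) {p..q}"
  proof (rule fundamental_theorem_of_calculus[OF \<open>p \<le> q\<close>])
    fix s assume "s \<in> {p..q}"
    then have "0 < s" using \<open>0 < p\<close> by simp
    then show "(x i has_vector_derivative velocity i s) (at s within {p..q})"
      by (rule has_vector_derivative_at_within[OF has_velocity[OF i]])
  qed
  then have "velocity i integrable_on {p..q}" "integral {p..q} (velocity i) = x i q - x i p"
    by (auto simp: has_integral_iff)
  moreover have "norm (integral {p..q} (velocity i)) \<le> integral {p..q} speed"
    using \<open>0 < p\<close> norm_velocity_le_speed[OF i]
    by (intro integral_norm_bound_integral[OF \<open>velocity i integrable_on {p..q}\<close> speed_integrable])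
  ultimately show ?thesis by simp
qed

lemma weight_nonneg: "0 \<le> weight i j t"
  unfolding comm_weight_def using \<psi>_nonneg N by simp

lemma sum_weight_le_1:
  assumes "i \<in> {1..N}"
  shows "(\<Sum>j\<in>{1..N} - {i}. weight i j t) \<le> 1"
proof -
  have "(\<Sum>j\<in>{1..N} - {i}. weight i j t) \<le> real (card ({1..N} - {i})) * (1 / (real N - 1))"
    using \<psi>_le1 N by (intro sum_bounded_above) (simp add: comm_weight_def divide_right_mono)
  also have "\<dots> = 1"
    using assms N by (simp add: of_nat_diff)
  finally show ?thesis .
qed

lemma weight_min_le:
  assumes "i \<in> {1..N}" "j \<in> {1..N}"
  shows "weight_min t \<le> weight i j t"
proof -
  have "weight_min t = Min ((\<lambda>p. weight (fst p) (snd p) t) ` ({1..N} \<times> {1..N}))"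
    unfolding min_weight_def by (rule arg_cong[where f = Min]) force
  also have "\<dots> \<le> weight i j t"
    using assms by (intro Min_le) force+
  finally show ?thesis .
qed

abbreviation travel where "travel s \<equiv> integral {s - \<tau>..s} speed"

lemma travel_nonneg: "\<tau> < s \<Longrightarrow> 0 \<le> travel s"
  by (intro Henstock_Kurzweil_Integration.integral_nonneg speed_integrable speed_nonneg) simp

lemma norm_delayed_gap_le:
  assumes "i \<in> {1..N}" "j \<in> {1..N}" "\<tau> < s"
  shows "norm (x j (s - \<tau>) - x i (s - \<sigma>)) \<le> diam (s - \<tau>) + travel s"
proof -
  have "norm (x j (s - \<tau>) - x i (s - \<sigma>))
      \<le> norm (x j (s - \<tau>) - x i (s - \<tau>)) + norm (x i (s - \<sigma>) - x i (s - \<tau>))"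
    using dist_triangle[of "x j (s - \<tau>)" "x i (s - \<sigma>)" "x i (s - \<tau>)"]
    by (simp add: dist_norm norm_minus_commute)
  also have "norm (x j (s - \<tau>) - x i (s - \<tau>)) \<le> diam (s - \<tau>)"
    using assms by (intro norm_le_diam)
  also have "norm (x i (s - \<sigma>) - x i (s - \<tau>)) \<le> integral {s - \<tau>..s - \<sigma>} speed"
    using assms \<sigma> by (intro displacement_le_integral_speed) auto
  also have "\<dots> \<le> travel s"
    using assms \<sigma> by (intro integral_subset_le speed_integrable) (auto simp: speed_nonneg)
  finally show ?thesis by simp
qed

lemma speed_le_diam_plus_travel:
  assumes "\<tau> < s"
  shows "speed s \<le> diam (s - \<tau>) + travel s"
proof -
  have "norm (velocity i s) \<le> diam (s - \<tau>) + travel s" if i: "i \<in> {1..N}" for i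
  proof -
    have "velocity i s = (\<Sum>j\<in>{1..N} - {i}. weight i j s *\<^sub>R (x j (s - \<tau>) - x i (s - \<sigma>)))"
      using assms \<tau>_nonneg by (intro velocity_eq[OF i]) simp
    then have "norm (velocity i s) \<le> (\<Sum>j\<in>{1..N} - {i}. weight i j s * norm (x j (s - \<tau>) - x i (s - \<sigma>)))"
      by (auto intro!: order_trans[OF norm_sum] simp: abs_of_nonneg[OF weight_nonneg])
    also have "\<dots> \<le> (\<Sum>j\<in>{1..N} - {i}. weight i j s) * (diam (s - \<tau>) + travel s)"
      unfolding sum_distrib_right
      using i assms by (intro sum_mono mult_left_mono norm_delayed_gap_le weight_nonneg) auto
    also have "\<dots> \<le> diam (s - \<tau>) + travel s"
      using sum_weight_le_1[OF i] diam_nonneg travel_nonneg[OF assms]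
      by (intro mult_left_le_one_le) (auto intro: sum_nonneg weight_nonneg)
    finally show ?thesis .
  qed
  then show ?thesis
    unfolding speed_eq using N by (subst Max_le_iff) auto
qed

definition drift_bound :: "real \<Rightarrow> real \<Rightarrow> real" where
  "drift_bound \<delta> t = integral {t - \<delta>..t} (\<lambda>s. diam (s - \<tau>)) + integral {t - \<delta>..t} travel"

lemma
  assumes "\<tau> < p"
  shows integrable_delayed_diam: "(\<lambda>s. diam (s - \<tau>)) integrable_on {p..q}"
    and integrable_travel: "travel integrable_on {p..q}"
proof -
  show "(\<lambda>s. diam (s - \<tau>)) integrable_on {p..q}"
    using assms \<tau>_nonneg
    by (intro integrable_continuous_interval continuous_on_compose2[OF continuous_on_diam])
       (auto intro!: continuous_intros)
  show "travel integrable_on {p..q}"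
    using assms \<tau>_nonneg
    by (intro integrable_continuous_interval continuous_on_integral_over_window
          continuous_on_subset[OF continuous_on_speed]) auto
qed

lemma displacement_le_drift_bound:
  assumes "2 * \<tau> < t" "0 \<le> \<delta>" "\<delta> \<le> \<tau>" "k \<in> {1..N}"
  shows "norm (x k t - x k (t - \<delta>)) \<le> drift_bound \<delta> t"
proof -
  have "\<tau> < t - \<delta>"
    using assms by linarith
  have "norm (x k t - x k (t - \<delta>)) \<le> integral {t - \<delta>..t} speed"
    using assms \<tau>_nonneg by (intro displacement_le_integral_speed) auto
  also have "\<dots> \<le> integral {t - \<delta>..t} (\<lambda>s. diam (s - \<tau>) + travel s)"
  proof (rule integral_le)
    show "speed integrable_on {t - \<delta>..t}"
      using \<open>\<tau> < t - \<delta>\<close> \<tau>_nonneg by (intro speed_integrable) simp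
    show "(\<lambda>s. diam (s - \<tau>) + travel s) integrable_on {t - \<delta>..t}"
      using \<open>\<tau> < t - \<delta>\<close> by (intro integrable_add integrable_delayed_diam integrable_travel)
    show "speed s \<le> diam (s - \<tau>) + travel s" if "s \<in> {t - \<delta>..t}" for s
      using that \<open>\<tau> < t - \<delta>\<close> by (intro speed_le_diam_plus_travel) simp
  qed
  also have "\<dots> = drift_bound \<delta> t"
    unfolding drift_bound_def using \<open>\<tau> < t - \<delta>\<close>
    by (intro Henstock_Kurzweil_Integration.integral_add integrable_delayed_diam integrable_travel)
  finally show ?thesis .
qed

lemma drift_bound_nonneg: "2 * \<tau> < t \<Longrightarrow> 0 \<le> \<delta> \<Longrightarrow> \<delta> \<le> \<tau> \<Longrightarrow> 0 \<le> drift_bound \<delta> t"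
  using order_trans[OF norm_ge_zero displacement_le_drift_bound[of t \<delta> 1]] N by simp

lemma norm_delay_error_le:
  assumes "2 * \<tau> < t" "i \<in> {1..N}" "k \<in> {1..N}"
  shows "norm ((x k (t - \<tau>) - x i (t - \<sigma>)) - (x k t - x i t)) \<le> drift_bound \<tau> t + drift_bound \<sigma> t"
proof -
  have "(x k (t - \<tau>) - x i (t - \<sigma>)) - (x k t - x i t) = (x i t - x i (t - \<sigma>)) - (x k t - x k (t - \<tau>))"
    by (simp add: algebra_simps)
  also have "norm \<dots> \<le> norm (x i t - x i (t - \<sigma>)) + norm (x k t - x k (t - \<tau>))"
    by (rule norm_triangle_ineq4)
  also have "\<dots> \<le> drift_bound \<sigma> t + drift_bound \<tau> t"
    using assms \<sigma> \<tau>_nonneg by (intro add_mono displacement_le_drift_bound) auto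
  finally show ?thesis by simp
qed

lemma inner_velocity_le:
  assumes t: "2 * \<tau> < t" and i: "i \<in> {1..N}" and j: "j \<in> {1..N}"
    and far: "norm (x i t - x j t) = diam t"
  shows "(x i t - x j t) \<bullet> velocity i t
    \<le> weight_min t * (\<Sum>k\<in>{1..N}. (x i t - x j t) \<bullet> (x k t - x i t))
       + diam t * (drift_bound \<tau> t + drift_bound \<sigma> t)"
proof -
  define w where "w = x i t - x j t"
  define M where "M = diam t * (drift_bound \<tau> t + drift_bound \<sigma> t)"
  have "0 \<le> M"
    unfolding M_def using t \<sigma> \<tau>_nonneg diam_nonneg by (simp add: drift_bound_nonneg)
  have toward: "w \<bullet> (x k t - x i t) \<le> 0" if k: "k \<in> {1..N}" for k
    unfolding w_def using far norm_le_diam[OF k j] by (intro inner_le_0_if_farthest) simp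
  have summand: "weight i k t * (w \<bullet> (x k (t - \<tau>) - x i (t - \<sigma>)))
      \<le> weight_min t * (w \<bullet> (x k t - x i t)) + weight i k t * M" if k: "k \<in> {1..N}" for k
  proof -
    have "w \<bullet> (x k (t - \<tau>) - x i (t - \<sigma>))
        = w \<bullet> (x k t - x i t) + w \<bullet> ((x k (t - \<tau>) - x i (t - \<sigma>)) - (x k t - x i t))"
      by (simp add: inner_diff_right)
    also have "w \<bullet> ((x k (t - \<tau>) - x i (t - \<sigma>)) - (x k t - x i t))
        \<le> norm w * norm ((x k (t - \<tau>) - x i (t - \<sigma>)) - (x k t - x i t))"
      by (rule norm_cauchy_schwarz)
    also have "\<dots> \<le> M"
      unfolding M_def w_def far using norm_delay_error_le[OF t i k] diam_nonneg
      by (intro mult_left_mono)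
    finally have "weight i k t * (w \<bullet> (x k (t - \<tau>) - x i (t - \<sigma>)))
        \<le> weight i k t * (w \<bullet> (x k t - x i t)) + weight i k t * M"
      using weight_nonneg by (simp add: mult_left_mono flip: distrib_left)
    also have "weight i k t * (w \<bullet> (x k t - x i t)) \<le> weight_min t * (w \<bullet> (x k t - x i t))"
      by (rule mult_right_mono_neg[OF weight_min_le[OF i k] toward[OF k]])
    finally show ?thesis by simp
  qed
  have "w \<bullet> velocity i t = (\<Sum>k\<in>{1..N} - {i}. weight i k t * (w \<bullet> (x k (t - \<tau>) - x i (t - \<sigma>))))"
    using t \<tau>_nonneg by (simp add: velocity_eq[OF i] inner_sum_right)
  also have "\<dots> \<le> (\<Sum>k\<in>{1..N} - {i}. weight_min t * (w \<bullet> (x k t - x i t)) + weight i k t * M)"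
    using summand by (intro sum_mono) simp
  also have "\<dots> = weight_min t * (\<Sum>k\<in>{1..N} - {i}. w \<bullet> (x k t - x i t)) + (\<Sum>k\<in>{1..N} - {i}. weight i k t) * M"
    by (simp add: sum.distrib sum_distrib_left sum_distrib_right)
  also have "(\<Sum>k\<in>{1..N} - {i}. w \<bullet> (x k t - x i t)) = (\<Sum>k\<in>{1..N}. w \<bullet> (x k t - x i t))"
    by (intro sum.mono_neutral_left) auto
  also have "(\<Sum>k\<in>{1..N} - {i}. weight i k t) * M \<le> M"
    using sum_weight_le_1[OF i] \<open>0 \<le> M\<close> by (simp add: mult_left_le_one_le sum_nonneg weight_nonneg)
  finally show ?thesis
    unfolding w_def M_def by simp
qed

lemma inner_relative_velocity_le:
  assumes t: "2 * \<tau> < t" and i: "i \<in> {1..N}" and j: "j \<in> {1..N}"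
    and far: "norm (x i t - x j t) = diam t"
  shows "(x i t - x j t) \<bullet> (velocity i t - velocity j t)
    \<le> diam t * (2 * drift_bound \<tau> t + 2 * drift_bound \<sigma> t - real N * weight_min t * diam t)"
proof -
  define w where "w = x i t - x j t"
  have far': "norm (x j t - x i t) = diam t"
    using far by (simp add: norm_minus_commute)
  have "(\<Sum>k\<in>{1..N}. w \<bullet> (x k t - x i t)) + (\<Sum>k\<in>{1..N}. - w \<bullet> (x k t - x j t))
      = (\<Sum>k\<in>{1..N}. - (w \<bullet> w))"
    unfolding sum.distrib[symmetric] by (rule sum.cong) (auto simp: w_def algebra_simps inner_diff_right)
  also have "\<dots> = - (real N * diam t ^ 2)"
    using far by (simp add: w_def flip: power2_norm_eq_inner)
  finally have sum_eq: "(\<Sum>k\<in>{1..N}. w \<bullet> (x k t - x i t)) + (\<Sum>k\<in>{1..N}. - w \<bullet> (x k t - x j t))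
      = - (real N * diam t ^ 2)" .
  have "w \<bullet> (velocity i t - velocity j t) = w \<bullet> velocity i t + (- w) \<bullet> velocity j t"
    by (simp add: inner_diff_right)
  also have "\<dots> \<le> weight_min t * ((\<Sum>k\<in>{1..N}. w \<bullet> (x k t - x i t)) + (\<Sum>k\<in>{1..N}. - w \<bullet> (x k t - x j t)))
      + 2 * diam t * (drift_bound \<tau> t + drift_bound \<sigma> t)"
    using inner_velocity_le[OF t i j far] inner_velocity_le[OF t j i far']
    by (simp add: w_def algebra_simps)
  also have "\<dots> = diam t * (2 * drift_bound \<tau> t + 2 * drift_bound \<sigma> t - real N * weight_min t * diam t)"
    unfolding sum_eq by (simp add: algebra_simps power2_eq_square)
  finally show ?thesis
    unfolding w_def .
qed

lemma deriv_diam_le: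
  assumes t: "2 * \<tau> < t" and "diam differentiable (at t)"
  shows "deriv diam t \<le> 2 * drift_bound \<tau> t + 2 * drift_bound \<sigma> t - real N * weight_min t * diam t"
proof -
  obtain D where D: "(diam has_real_derivative D) (at t)" and "deriv diam t = D"
    using assms(2) DERIV_deriv_iff_real_differentiable by blast
  have "0 < t"
    using t \<tau>_nonneg by simp
  show ?thesis
  proof (cases "diam t = 0")
    case True
    then have "D = 0"
      using diam_nonneg by (intro DERIV_local_min[OF D, of 1]) auto
    then show ?thesis
      using True t \<sigma> \<tau>_nonneg \<open>deriv diam t = D\<close> by (simp add: drift_bound_nonneg)
  next
    case False
    then have "0 < diam t"
      using diam_nonneg[of t] by simp
    obtain i j where i: "i \<in> {1..N}" and j: "j \<in> {1..N}" and far: "diam t = norm (x i t - x j t)"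
      using diam_attained by blast
    define u where "u s = x i s - x j s" for s
    have "(u has_vector_derivative velocity i t - velocity j t) (at t)"
      unfolding u_def using \<open>0 < t\<close> i j by (intro has_vector_derivative_diff has_velocity)
    moreover have "u t \<noteq> 0"
      using \<open>0 < diam t\<close> far by (auto simp: u_def)
    ultimately have "((\<lambda>s. norm (u s)) has_real_derivative (velocity i t - velocity j t) \<bullet> sgn (u t)) (at t)"
      by (rule has_real_derivative_norm)
    then have "D = (velocity i t - velocity j t) \<bullet> sgn (u t)"
      using norm_le_diam[OF i j] far
      by (intro DERIV_eq_if_touching_from_below[OF D]) (auto simp: u_def)
    also have "\<dots> = (x i t - x j t) \<bullet> (velocity i t - velocity j t) / diam t"
      using far by (simp add: u_def sgn_div_norm inner_commute divide_inverse mult.commute)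
    also have "\<dots> \<le> 2 * drift_bound \<tau> t + 2 * drift_bound \<sigma> t - real N * weight_min t * diam t"
      using inner_relative_velocity_le[OF t i j far[symmetric]] \<open>0 < diam t\<close>
      by (simp add: divide_le_eq mult.commute)
    finally show ?thesis
      using \<open>deriv diam t = D\<close> by simp
  qed
qed

end

theorem lemma3p2:
  fixes N :: nat and \<sigma> \<tau> :: real and \<psi> :: "real \<Rightarrow> real"
    and x :: "nat \<Rightarrow> real \<Rightarrow> 'a::euclidean_space"
  assumes N: "N \<ge> 2"
    and \<sigma>: "0 \<le> \<sigma>" "\<sigma> \<le> \<tau>"
    and \<psi>_cont: "continuous_on {0..} \<psi>"
    and \<psi>_mono: "\<And>r s. 0 \<le> r \<Longrightarrow> r \<le> s \<Longrightarrow> \<psi> s \<le> \<psi> r"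
    and \<psi>_pos: "\<And>r. 0 \<le> r \<Longrightarrow> \<psi> r > 0"
    and \<psi>_le1: "\<And>r. 0 \<le> r \<Longrightarrow> \<psi> r \<le> 1"
    and x_cont: "\<And>i. i \<in> {1..N} \<Longrightarrow> continuous_on {-\<tau>..} (x i)"
    and x_C1: "\<And>i. i \<in> {1..N} \<Longrightarrow>
                 \<exists>x'. continuous_on {0..} x' \<and>
                      (\<forall>t\<ge>0. (x i has_vector_derivative x' t) (at t within {0..}))"
    and x_ode: "\<And>i t. i \<in> {1..N} \<Longrightarrow> t > 0 \<Longrightarrow>
                 (x i has_vector_derivative
                    (\<Sum>j\<in>{1..N} - {i}. comm_weight \<psi> N \<sigma> \<tau> x i j t *\<^sub>R (x j (t - \<tau>) - x i (t - \<sigma>))))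
                 (at t)"
  shows "AE t in lborel. t > 2 * \<tau> \<longrightarrow>
           (diam_x N x) differentiable (at t) \<and>
           deriv (diam_x N x) t \<le>
              2 * integral {t - \<tau>..t} (\<lambda>s. diam_x N x (s - \<tau>))
            + 2 * integral {t - \<sigma>..t} (\<lambda>s. diam_x N x (s - \<tau>))
            + 2 * integral {t - \<tau>..t} (\<lambda>s. integral {s - \<tau>..s} (\<lambda>r. max_speed N x r))
            + 2 * integral {t - \<sigma>..t} (\<lambda>s. integral {s - \<tau>..s} (\<lambda>r. max_speed N x r))
            - real N * min_weight \<psi> N \<sigma> \<tau> x t * diam_x N x t"
proof -
  interpret delayed_consensus N \<sigma> \<tau> \<psi> x
    by (unfold_locales; (fact assms)?) (rule less_imp_le[OF \<psi>_pos])
  have "AE t in lborel. t \<notin> {t\<in>{0<..}. \<not> diam differentiable (at t)}"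
    by (intro AE_not_in countable_imp_null_set_lborel countable_nondifferentiable_diam)
  then have "AE t in lborel. 2 * \<tau> < t \<longrightarrow> diam differentiable (at t) \<and>
      deriv diam t \<le> 2 * drift_bound \<tau> t + 2 * drift_bound \<sigma> t - real N * weight_min t * diam t"
    by (rule eventually_mono) (use \<tau>_nonneg deriv_diam_le in auto)
  then show ?thesis
    by (simp add: drift_bound_def algebra_simps)
qed

end
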